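(* Let $r$ be a positive integer, $p \equiv 3 \pmod 4$ a prime, and $q=p^{4r}$. Let $g$ be a primitive root of $\mathbb{F}_q$ and let $$B=\{g^{4k}:1 \leq k \leq (q-1)/4\} \cup \{g^{4k+3}:1 \leq k \leq (q-1)/4\}.$$ Let $I=\{x^{p^r}-x: x \in \mathbb{F}_q\}$. If $h \in \mathbb{F}_q \setminus \mathbb{F}_{p^r}$, then $\mathbb{F}_{p^r} \oplus h\mathbb{F}_{p^r}=\{x+hy: x,y\in\mathbb{F}_{p^r}\}$ forms a (maximum) clique in the Peisert graph $P_q^*$ (constructed with $g$) if and only if $I \cap h^{-1} I \cap B=\emptyset$.
   Context: The Peisert graph $P_q^*$ (for $q=p^{2s}$, $p\equiv 3\pmod 4$, with primitive root $g$) has vertex set $\mathbb{F}_q$, two distinct vertices being adjacent iff their difference lies in $\{g^j: j \equiv 0,1 \pmod 4\}$. $h^{-1}I=\{h^{-1}x: x\in I\}$. *)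

theory Defs
  imports "HOL-Computational_Algebra.Primes"
begin

definition primitive_root :: "'a::{finite,field} \<Rightarrow> bool" where
  "primitive_root g \<longleftrightarrow> g \<noteq> 0 \<and> (\<forall>x. x \<noteq> 0 \<longrightarrow> (\<exists>k::nat. x = g ^ k))"

definition peisert_adj :: "'a::{finite,field} \<Rightarrow> 'a \<Rightarrow> 'a \<Rightarrow> bool" where
  "peisert_adj g x y \<longleftrightarrow> x \<noteq> y \<and> (\<exists>j::nat. (j mod 4 = 0 \<or> j mod 4 = 1) \<and> x - y = g ^ j)"

definition peisert_clique :: "'a::{finite,field} \<Rightarrow> 'a set \<Rightarrow> bool" where
  "peisert_clique g S \<longleftrightarrow> (\<forall>x\<in>S. \<forall>y\<in>S. x \<noteq> y \<longrightarrow> peisert_adj g x y)"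

definition subfield_pow :: "nat \<Rightarrow> 'a::{finite,field} set" where
  "subfield_pow m = {x. x ^ m = x}"

end

theory Submission
  imports Defs "HOL-Number_Theory.Residues" "HOL-Computational_Algebra.Polynomial"
begin

text \<open>
  Write \<open>Q = p ^ r\<close>, \<open>K = F_Q\<close> and \<open>tr\<close> for the trace from \<open>F_q\<close> to \<open>K\<close>. The set
  \<open>S = K + hK\<close> (\<open>span2 h\<close>) is a 2-dimensional \<open>K\<close>-subspace, and its annihilator under the
  pairing \<open>(a, c) \<mapsto> tr (a c)\<close> is \<open>R = I \<inter> h\<^sup>-\<^sup>1 I\<close> (\<open>annih h\<close>), since \<open>I = ker tr\<close> (additive Hilbert 90).
  Let \<open>chi x = x ^ e\<close>, \<open>e = (q - 1) / 4\<close>, be the quartic character, \<open>iota = chi g\<close>, and let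
  \<open>C\<close>, \<open>D\<close>, \<open>B\<close> be the nonzero elements with \<open>chi\<close> in \<open>{1, iota}\<close>, \<open>{iota, -1}\<close>, \<open>{1, -iota}\<close>;
  \<open>C\<close> is the connection set of the Peisert graph.

  For \<open>a \<noteq> 0\<close> the number \<open>orth_count a\<close> of \<open>c \<in> C\<close> with \<open>tr (a c) = 0\<close> is a constant \<open>X\<close> on \<open>D\<close> and a
  constant \<open>Y\<close> on \<open>B\<close>: multiplying by \<open>a\<close> permutes the character classes, and the Frobenius
  map \<open>x \<mapsto> x ^ p\<close> swaps the classes of \<open>iota\<close> and \<open>-iota\<close> inside \<open>ker tr\<close>. Counting the pairs
  \<open>(a, c) \<in> R \<times> C\<close> with \<open>tr (a c) = 0\<close> in two ways gives
  \<open>2 e + |R \<inter> D| X + |R \<inter> B| Y = |C \<inter> S| Q\<^sup>2 + |C - S| Q\<close>.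
  Clearly \<open>X + Y = Q\<^sup>3 - 1\<close>. A second moment computation gives \<open>(X - Y)\<^sup>2 = Q\<^sup>2 (Q - 1)\<^sup>2\<close>, and the
  sign comes from \<open>X - Y \<equiv> \<plusminus>(Q - 1) mod 4 (Q - 1)\<close>: away from the \<open>Q - 1\<close> elements of
  \<open>E = {y \<noteq> 0. y ^ Q = - y}\<close>, the nonzero elements of \<open>ker tr\<close> with \<open>chi = \<plusminus>1\<close> fall into orbits
  of size \<open>4 (Q - 1)\<close> under scaling by \<open>K\<^sup>*\<close> and the Frobenius map \<open>y \<mapsto> y ^ Q\<close>.
  So \<open>X - Y = Q (Q - 1)\<close>, and the double count forces \<open>|C \<inter> S| = |R \<inter> D|\<close>. As
  \<open>|S - {0}| = |R - {0}| = Q\<^sup>2 - 1\<close>, \<open>S\<close> is a clique iff \<open>S - {0} \<subseteq> C\<close> iff \<open>R \<inter> B = {}\<close>.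
\<close>

lemma card_eq_card_image_mult_card_kernel:
  fixes f :: "'b::ab_group_add \<Rightarrow> 'c::ab_group_add"
  assumes "finite V"
    and diff_closed: "\<And>x y. x \<in> V \<Longrightarrow> y \<in> V \<Longrightarrow> x - y \<in> V"
    and add_closed: "\<And>x y. x \<in> V \<Longrightarrow> y \<in> V \<Longrightarrow> x + y \<in> V"
    and additive: "\<And>x y. x \<in> V \<Longrightarrow> y \<in> V \<Longrightarrow> f (x + y) = f x + f y"
  shows "card V = card (f ` V) * card {x\<in>V. f x = 0}"
proof -
  define ker where "ker = {x\<in>V. f x = 0}"
  define fiber where "fiber y = {x\<in>V. f x = y}" for y
  have card_fiber: "card (fiber y) = card ker" if "y \<in> f ` V" for y
  proof -
    from that obtain x0 where x0: "x0 \<in> V" "y = f x0" by auto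
    have shift: "f x = f (x - x0) + f x0" if "x \<in> V" for x
      using additive[of "x - x0" x0] diff_closed[OF that x0(1)] x0(1) by simp
    have "bij_betw (\<lambda>x. x - x0) (fiber y) ker"
    proof (rule bij_betw_byWitness[where f' = "\<lambda>k. k + x0"])
      show "(\<lambda>x. x - x0) ` fiber y \<subseteq> ker"
      proof
        fix z assume "z \<in> (\<lambda>x. x - x0) ` fiber y"
        then obtain x where "x \<in> V" "f x = f x0" "z = x - x0" using x0 by (auto simp: fiber_def)
        then show "z \<in> ker" using shift[of x] diff_closed x0(1) by (simp add: ker_def)
      qed
      show "(\<lambda>k. k + x0) ` ker \<subseteq> fiber y"
        using additive add_closed x0 by (auto simp: fiber_def ker_def)
    qed simp_all
    then show ?thesis by (rule bij_betw_same_card)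
  qed
  have "V = (\<Union>y\<in>f ` V. fiber y)" by (auto simp: fiber_def)
  then have "card V = card (\<Union>y\<in>f ` V. fiber y)" by (rule arg_cong)
  also have "\<dots> = (\<Sum>y\<in>f ` V. card (fiber y))"
    by (rule card_UN_disjoint) (use \<open>finite V\<close> in \<open>auto simp: fiber_def\<close>)
  also have "\<dots> = card (f ` V) * card ker" by (simp add: card_fiber)
  finally show ?thesis by (simp add: ker_def)
qed

lemma finite_field_pow_card_minus_one:
  fixes x :: "'a::{finite,field}"
  assumes "x \<noteq> 0"
  shows "x ^ (card (UNIV :: 'a set) - 1) = 1"
proof -
  have "(\<Prod>y\<in>UNIV - {0}. x * y) = (\<Prod>y\<in>UNIV - {0}. y)"
    by (rule prod.reindex_bij_witness[of _ "\<lambda>y. y / x" "\<lambda>y. x * y"]) (use assms in auto)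
  then have "x ^ card (UNIV - {0::'a}) * (\<Prod>y\<in>UNIV - {0}. y) = 1 * (\<Prod>y\<in>UNIV - {0}. y)"
    by (simp add: prod.distrib)
  then show ?thesis by (simp add: card_Diff_singleton)
qed

lemma double_count_cancel:
  fixes e nD nB c d Y Q :: int
  assumes count: "2 * e + nD * (Y + Q * (Q - 1)) + nB * Y = c * Q ^ 2 + d * Q"
    and "c + d = 2 * e" and "nD + nB + 1 = Q ^ 2" and Y: "(Q + 1) * Y = 2 * e"
  shows "Q * (Q - 1) * nD = Q * (Q - 1) * c"
proof -
  have "nD + nB = Q ^ 2 - 1" using assms(3) by simp
  then have "(nD + nB) * Y = (Q - 1) * ((Q + 1) * Y)"
    by (simp only:) (simp add: algebra_simps power2_eq_square)
  then have classes: "(nD + nB) * Y = (Q - 1) * (2 * e)" by (simp only: Y)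
  have "Q * (2 * e) + Q * (Q - 1) * nD = 2 * e + (nD + nB) * Y + Q * (Q - 1) * nD"
    by (simp only: classes) (simp add: algebra_simps)
  also have "\<dots> = c * Q ^ 2 + d * Q" by (rule trans[OF _ count]) (simp add: algebra_simps)
  also have "\<dots> = Q * (c + d) + Q * (Q - 1) * c" by (simp add: algebra_simps power2_eq_square)
  finally show ?thesis by (simp add: assms(2))
qed

locale quartic_extension =
  fixes p r :: nat and g :: "'a::{finite,field}"
  assumes r_pos: "r > 0" and prime_p: "prime p"
    and card_UNIV: "card (UNIV :: 'a set) = p ^ (4 * r)"
    and primitive_g: "primitive_root g"
begin

definition Q :: nat where "Q = p ^ r"

definition q :: nat where "q = card (UNIV :: 'a set)"

abbreviation K :: "'a set" where "K \<equiv> subfield_pow Q"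

lemma q_eq: "q = Q ^ 4"
  by (simp add: q_def Q_def card_UNIV power_mult mult.commute)

lemma Q_ge_2: "Q \<ge> 2"
proof -
  have "p ^ 1 \<le> p ^ r" using r_pos prime_gt_1_nat[OF prime_p] by (intro power_increasing) auto
  then show ?thesis using prime_ge_2_nat[OF prime_p] by (simp add: Q_def)
qed

lemma q_minus_one_factor: "q - 1 = (Q - 1) * (Q ^ 3 + Q ^ 2 + Q + 1)"
proof -
  have "int (q - 1) = int Q ^ 4 - 1" using q_eq Q_ge_2 by (simp add: of_nat_diff)
  also have "\<dots> = (int Q - 1) * (int Q ^ 3 + int Q ^ 2 + int Q + 1)"
    by (simp add: power2_eq_square power3_eq_cube power4_eq_xxxx algebra_simps)
  also have "\<dots> = int (Q - 1) * int (Q ^ 3 + Q ^ 2 + Q + 1)" using Q_ge_2 by simp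
  also have "\<dots> = int ((Q - 1) * (Q ^ 3 + Q ^ 2 + Q + 1))" by (simp only: of_nat_mult)
  finally show ?thesis by (simp only: of_nat_eq_iff)
qed

lemma CHAR_eq: "CHAR('a) = p"
proof -
  have "prime CHAR('a)" by (rule prime_CHAR_semidom, rule finite_imp_CHAR_pos) simp
  moreover have "CHAR('a) dvd p ^ (4 * r)" using CHAR_dvd_CARD[where 'a='a] card_UNIV by simp
  ultimately show ?thesis using prime_p by (simp add: prime_dvd_power primes_dvd_imp_eq)
qed

lemma pow_p_pow_add: "(x + y :: 'a) ^ (p ^ n) = x ^ (p ^ n) + y ^ (p ^ n)"
  by (rule freshmans_dream') (auto simp: CHAR_eq prime_p)

lemma pow_p_pow_diff: "(x - y :: 'a) ^ (p ^ n) = x ^ (p ^ n) - y ^ (p ^ n)"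
  using pow_p_pow_add[of "x - y" y n] by (simp add: algebra_simps)

lemma pow_p_pow_inj: "inj (\<lambda>x::'a. x ^ (p ^ n))"
proof (rule injI)
  fix x y :: 'a
  assume "x ^ (p ^ n) = y ^ (p ^ n)"
  then have "(x - y) ^ (p ^ n) = 0" by (simp add: pow_p_pow_diff)
  then show "x = y" by simp
qed

lemma pow_Q_pow_add: "(x + y :: 'a) ^ (Q ^ k) = x ^ (Q ^ k) + y ^ (Q ^ k)"
  by (simp add: Q_def pow_p_pow_add flip: power_mult)

lemma pow_Q_pow_diff: "(x - y :: 'a) ^ (Q ^ k) = x ^ (Q ^ k) - y ^ (Q ^ k)"
  by (simp add: Q_def pow_p_pow_diff flip: power_mult)

lemma pow_q_minus_one: "(x :: 'a) \<noteq> 0 \<Longrightarrow> x ^ (q - 1) = 1"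
  unfolding q_def by (rule finite_field_pow_card_minus_one)

lemma pow_Q4: "(x :: 'a) ^ (Q ^ 4) = x"
proof (cases "x = 0")
  case False
  have "Q ^ 4 = Suc (q - 1)" using q_eq Q_ge_2 by simp
  then show ?thesis using pow_q_minus_one[OF False] by simp
qed (use Q_ge_2 in simp)

lemma pow_Q_pow_mod_4: "(x :: 'a) ^ (Q ^ n) = x ^ (Q ^ (n mod 4))"
proof -
  have "x ^ (Q ^ (4 * m)) = x" for m
    by (induction m) (simp_all add: power_add power_mult pow_Q4)
  then have "x ^ (Q ^ (4 * (n div 4) + n mod 4)) = x ^ (Q ^ (n mod 4))"
    by (simp only: power_add power_mult mult.commute[of "Q ^ (4 * _)"])
  then show ?thesis by simp
qed

lemma g_ne_0: "g \<noteq> 0"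
  using primitive_g by (simp add: primitive_root_def)

lemma q_minus_one_pos: "q - 1 > 0"
proof -
  have "2 ^ 4 \<le> Q ^ 4" using Q_ge_2 by (rule power_mono) simp
  then show ?thesis by (simp add: q_eq)
qed

lemma g_pow_mod: "g ^ k = g ^ (k mod (q - 1))"
proof -
  have "g ^ k = g ^ ((q - 1) * (k div (q - 1)) + k mod (q - 1))" by simp
  also have "\<dots> = g ^ (k mod (q - 1))"
    by (simp only: power_add power_mult pow_q_minus_one[OF g_ne_0] power_one mult_1_left)
  finally show ?thesis .
qed

lemma g_pow_eq_iff: "g ^ i = g ^ j \<longleftrightarrow> i mod (q - 1) = j mod (q - 1)"
proof -
  have "(\<lambda>k. g ^ k) ` {..<q - 1} = UNIV - {0}"
  proof
    show "UNIV - {0} \<subseteq> (\<lambda>k. g ^ k) ` {..<q - 1}"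
    proof
      fix x :: 'a assume "x \<in> UNIV - {0}"
      then obtain k where "x = g ^ k" using primitive_g by (auto simp: primitive_root_def)
      then have "x = g ^ (k mod (q - 1))" by (simp add: g_pow_mod[of k])
      then show "x \<in> (\<lambda>k. g ^ k) ` {..<q - 1}" using q_minus_one_pos by auto
    qed
  qed (use g_ne_0 in auto)
  moreover have "card (UNIV - {0::'a}) = q - 1" by (simp add: q_def card_Diff_singleton)
  ultimately have inj: "inj_on (\<lambda>k. g ^ k) {..<q - 1}"
    by (simp add: eq_card_imp_inj_on)
  have "g ^ i = g ^ j \<longleftrightarrow> g ^ (i mod (q - 1)) = g ^ (j mod (q - 1))"
    using g_pow_mod[of i] g_pow_mod[of j] by simp
  also have "\<dots> \<longleftrightarrow> i mod (q - 1) = j mod (q - 1)"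
    using inj_on_eq_iff[OF inj] q_minus_one_pos by simp
  finally show ?thesis .
qed

lemma g_pow_eq_1_iff: "g ^ k = 1 \<longleftrightarrow> (q - 1) dvd k"
  using g_pow_eq_iff[of k 0] by (simp add: mod_eq_0_iff_dvd)

lemma pow_Q_pow_pow: "((x :: 'a) ^ (Q ^ m)) ^ (Q ^ n) = x ^ (Q ^ (m + n))"
  by (simp add: power_add power_mult)

lemma mem_K_iff: "x \<in> K \<longleftrightarrow> x ^ Q = x"
  by (simp add: subfield_pow_def)

lemma K_zero: "0 \<in> K"
  using Q_ge_2 by (simp add: mem_K_iff)

lemma K_one: "1 \<in> K"
  by (simp add: mem_K_iff)

lemma K_diff: "x \<in> K \<Longrightarrow> y \<in> K \<Longrightarrow> x - y \<in> K"
  using pow_Q_pow_diff[of x y 1] by (simp add: mem_K_iff)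

lemma K_mult: "x \<in> K \<Longrightarrow> y \<in> K \<Longrightarrow> x * y \<in> K"
  by (simp add: mem_K_iff power_mult_distrib)

lemma K_inverse: "x \<in> K \<Longrightarrow> inverse x \<in> K"
  by (simp add: mem_K_iff power_inverse)

lemma K_divide: "x \<in> K \<Longrightarrow> y \<in> K \<Longrightarrow> x / y \<in> K"
  by (simp add: mem_K_iff power_divide)

lemma K_pow_Q_pow: "x \<in> K \<Longrightarrow> x ^ (Q ^ k) = x"
  by (induction k) (auto simp: mem_K_iff power_mult)

lemma card_K: "card K = Q"
proof (rule antisym)
  define P :: "'a poly" where "P = monom 1 Q - monom 1 1"
  have "coeff P Q = 1" using Q_ge_2 by (simp add: P_def)
  then have "P \<noteq> 0" by auto
  have "degree P \<le> Q"
    unfolding P_def by (intro degree_diff_le degree_monom_le order.trans[OF degree_monom_le])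
      (use Q_ge_2 in auto)
  moreover have "K = {x. poly P x = 0}" by (auto simp: mem_K_iff P_def poly_monom)
  ultimately show "card K \<le> Q" using card_poly_roots_bound[OF \<open>P \<noteq> 0\<close>] by simp
next
  \<comment> \<open>the powers of \<open>g\<^sup>m\<close>, \<open>m = (q - 1) / (Q - 1)\<close>, together with \<open>0\<close> give \<open>Q\<close> elements of \<open>K\<close>\<close>
  define m where "m = Q ^ 3 + Q ^ 2 + Q + 1"
  have qm: "q - 1 = (Q - 1) * m" using q_minus_one_factor by (simp add: m_def)
  have "g ^ (m * k) \<in> K" for k
  proof -
    have "m * k * Q = m * k + (q - 1) * k" using qm Q_ge_2 by (simp add: algebra_simps)
    then have "(g ^ (m * k)) ^ Q = g ^ (m * k) * (g ^ (q - 1)) ^ k"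
      by (simp add: power_add power_mult flip: power_mult)
    then show ?thesis using pow_q_minus_one[OF g_ne_0] by (simp add: mem_K_iff)
  qed
  then have sub: "insert 0 ((\<lambda>k. g ^ (m * k)) ` {..<Q - 1}) \<subseteq> K" using K_zero by auto
  have "inj_on (\<lambda>k. g ^ (m * k)) {..<Q - 1}"
  proof (rule inj_onI)
    fix i j assume "i \<in> {..<Q - 1}" "j \<in> {..<Q - 1}" "g ^ (m * i) = g ^ (m * j)"
    moreover have "m > 0" by (simp add: m_def)
    ultimately have "m * i < q - 1" "m * j < q - 1" "m * i = m * j"
      using qm g_pow_eq_iff[of "m * i" "m * j"] by (auto simp: mult.commute)
    then show "i = j" using \<open>m > 0\<close> by simp
  qed
  then have "card (insert 0 ((\<lambda>k. g ^ (m * k)) ` {..<Q - 1})) = Q"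
    using g_ne_0 Q_ge_2 by (subst card_insert_disjoint) (auto simp: card_image)
  then show "Q \<le> card K" using card_mono[OF _ sub] by simp
qed

lemma card_K_minus_zero: "card (K - {0}) = Q - 1"
  using card_K K_zero by (simp add: card_Diff_singleton)

definition tr :: "'a \<Rightarrow> 'a" where
  "tr x = x + x ^ Q + x ^ (Q ^ 2) + x ^ (Q ^ 3)"

lemma tr_add: "tr (x + y) = tr x + tr y"
  using pow_Q_pow_add[of x y 1] pow_Q_pow_add[of x y 2] pow_Q_pow_add[of x y 3]
  by (simp add: tr_def algebra_simps)

lemma tr_diff: "tr (x - y) = tr x - tr y"
  using pow_Q_pow_diff[of x y 1] pow_Q_pow_diff[of x y 2] pow_Q_pow_diff[of x y 3]
  by (simp add: tr_def algebra_simps)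

lemma tr_zero: "tr 0 = 0"
  using tr_diff[of 0 0] by simp

lemma tr_scale: "c \<in> K \<Longrightarrow> tr (c * x) = c * tr x"
  using K_pow_Q_pow[of c 1] K_pow_Q_pow[of c 2] K_pow_Q_pow[of c 3]
  by (simp add: tr_def power_mult_distrib algebra_simps)

lemma tr_scale': "c \<in> K \<Longrightarrow> tr (u * (c * x)) = c * tr (u * x)"
  using tr_scale[of c "u * x"] by (simp add: mult.left_commute)

lemma pow_Q_pow_Q: "((x :: 'a) ^ Q) ^ (Q ^ n) = x ^ (Q ^ Suc n)"
  by (simp add: power_mult)

lemma pow_Q_pow_Suc: "((x :: 'a) ^ (Q ^ n)) ^ Q = x ^ (Q ^ Suc n)"
  by (simp only: power_Suc2 power_mult)

lemma tr_pow_Q: "tr (x ^ Q) = tr x"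
  using pow_Q_pow_Q[of x 1] pow_Q_pow_Q[of x 2] pow_Q_pow_Q[of x 3] pow_Q4[of x]
  by (simp add: tr_def power2_eq_square add_ac)

lemma tr_pow_Q_pow: "tr (x ^ (Q ^ n)) = tr x"
  by (induction n arbitrary: x) (simp_all add: power_mult tr_pow_Q)

lemma tr_in_K: "tr x \<in> K"
  using pow_Q_pow_add[where k = 1] pow_Q_pow_Suc[of x 1] pow_Q_pow_Suc[of x 2] pow_Q_pow_Suc[of x 3]
    pow_Q4[of x]
  by (simp add: mem_K_iff tr_def power2_eq_square add_ac)

lemma tr_pow_p: "tr (x ^ p) = tr x ^ p"
  using pow_p_pow_add[where n = 1] by (simp add: tr_def flip: power_mult) (simp add: mult.commute)

lemma tr_not_zero: "\<exists>x. tr x \<noteq> 0"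
proof (rule ccontr)
  assume "\<not> (\<exists>x. tr x \<noteq> 0)"
  define P :: "'a poly" where "P = monom 1 1 + monom 1 Q + monom 1 (Q ^ 2) + monom 1 (Q ^ 3)"
  have "1 < Q" "Q < Q ^ 2" "Q ^ 2 < Q ^ 3"
    using Q_ge_2 power_strict_increasing[of 1 2 Q] power_strict_increasing[of 2 3 Q] by auto
  then have "Suc 0 \<noteq> Q ^ 3" "Q \<noteq> Q ^ 3" "Q ^ 2 \<noteq> Q ^ 3" by linarith+
  then have "coeff P (Q ^ 3) = 1" by (simp add: P_def)
  then have "P \<noteq> 0" by auto
  have "1 \<le> Q ^ 3" "Q \<le> Q ^ 3" "Q ^ 2 \<le> Q ^ 3"
    using \<open>1 < Q\<close> \<open>Q < Q ^ 2\<close> \<open>Q ^ 2 < Q ^ 3\<close> by linarith+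
  then have "degree P \<le> Q ^ 3" unfolding P_def
    by (intro degree_add_le order.trans[OF degree_monom_le]) auto
  moreover have "UNIV = {x. poly P x = 0}"
    using \<open>\<not> (\<exists>x. tr x \<noteq> 0)\<close> by (auto simp: tr_def P_def poly_monom)
  ultimately have "Q ^ 4 \<le> Q ^ 3"
    using card_poly_roots_bound[OF \<open>P \<noteq> 0\<close>] q_eq by (simp add: q_def)
  then show False using power_strict_increasing[of 3 4 Q] Q_ge_2 by simp
qed

lemma tr_mult_eq_1: "u \<noteq> 0 \<Longrightarrow> \<exists>a. tr (u * a) = 1"
proof -
  assume "u \<noteq> 0"
  obtain x where x: "tr x \<noteq> 0" using tr_not_zero by blast
  have "tr (u * (inverse (tr x) * x / u)) = tr (inverse (tr x) * x)"
    using \<open>u \<noteq> 0\<close> by simp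
  also have "\<dots> = 1" using x by (simp add: tr_scale K_inverse tr_in_K)
  finally show ?thesis by blast
qed

lemma card_eq_Q_mult_card_tr_kernel:
  assumes add_closed: "\<And>x y. x \<in> V \<Longrightarrow> y \<in> V \<Longrightarrow> x + y \<in> V"
    and diff_closed: "\<And>x y. x \<in> V \<Longrightarrow> y \<in> V \<Longrightarrow> x - y \<in> V"
    and scale_closed: "\<And>c x. c \<in> K \<Longrightarrow> x \<in> V \<Longrightarrow> c * x \<in> V"
    and "a1 \<in> V" "tr (w * a1) = 1"
  shows "card V = Q * card {a\<in>V. tr (w * a) = 0}"
proof -
  have "(\<lambda>a. tr (w * a)) ` V = K"
  proof
    show "K \<subseteq> (\<lambda>a. tr (w * a)) ` V"
    proof
      fix c assume "c \<in> K"
      then have "tr (w * (c * a1)) = c" "c * a1 \<in> V"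
        using tr_scale' scale_closed assms(4,5) by simp_all
      then show "c \<in> (\<lambda>a. tr (w * a)) ` V" by (metis image_eqI)
    qed
  qed (use tr_in_K in auto)
  moreover have "card V = card ((\<lambda>a. tr (w * a)) ` V) * card {a\<in>V. tr (w * a) = 0}"
    by (rule card_eq_card_image_mult_card_kernel) (auto simp: add_closed diff_closed distrib_left tr_add)
  ultimately show ?thesis using card_K by simp
qed

lemma Q_mult_cancel: "Q * n = Q ^ Suc k \<Longrightarrow> n = Q ^ k"
  using Q_ge_2 by simp

lemma card_tr_kernel: "card {x. tr x = 0} = Q ^ 3"
proof -
  obtain a1 where "tr (1 * a1) = 1" using tr_mult_eq_1[of 1] by auto
  then have "card (UNIV :: 'a set) = Q * card {a\<in>UNIV. tr (1 * a) = 0}"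
    by (intro card_eq_Q_mult_card_tr_kernel) auto
  then have "Q * card {x. tr x = 0} = Q ^ Suc 3" using q_eq by (simp add: q_def)
  then show ?thesis by (rule Q_mult_cancel)
qed

lemma card_tr_mult_kernel:
  assumes "c \<noteq> 0"
  shows "card {a. tr (a * c) = 0} = Q ^ 3"
proof -
  have "bij_betw (\<lambda>a. a * c) {a. tr (a * c) = 0} {x. tr x = 0}"
    by (rule bij_betw_byWitness[where f' = "\<lambda>x. x / c"]) (use assms in auto)
  then have "card {a. tr (a * c) = 0} = card {x. tr x = 0}" by (rule bij_betw_same_card)
  then show ?thesis using card_tr_kernel by simp
qed

lemma mult_K_of_tr_orth:
  assumes "u \<noteq> 0" and orth: "\<And>a. tr (u * a) = 0 \<Longrightarrow> tr (v * a) = 0"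
  shows "\<exists>l\<in>K. v = l * u"
proof -
  obtain a0 where a0: "tr (u * a0) = 1" using tr_mult_eq_1[OF \<open>u \<noteq> 0\<close>] by auto
  define l where "l = tr (v * a0)"
  have "tr ((v - l * u) * a) = 0" for a
  proof -
    define m where "m = tr (u * a)"
    have m: "m \<in> K" by (simp add: m_def tr_in_K)
    have "tr (u * (a - m * a0)) = 0"
      using tr_scale'[OF m, of u a0] a0 by (simp add: right_diff_distrib tr_diff m_def)
    then have "tr (v * (a - m * a0)) = 0" by (rule orth)
    then have "tr (v * a) = m * l" using tr_scale'[OF m, of v a0] by (simp add: right_diff_distrib tr_diff l_def)
    moreover have "tr (l * u * a) = l * m"
      using tr_scale[of l "u * a"] tr_in_K by (simp add: l_def m_def mult.assoc)
    ultimately show ?thesis by (simp only: left_diff_distrib tr_diff) (simp add: mult.commute)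
  qed
  note orth_all = this
  have "v - l * u = 0"
  proof (rule ccontr)
    assume "v - l * u \<noteq> 0"
    then obtain a where "tr ((v - l * u) * a) = 1" using tr_mult_eq_1 by blast
    then show False using orth_all[of a] by simp
  qed
  then show ?thesis using tr_in_K by (auto simp: l_def)
qed

lemma tr_dual_basis:
  assumes "h \<notin> K"
  obtains a1 a2 where "tr a1 = 1" "tr (h * a1) = 0" "tr a2 = 0" "tr (h * a2) = 1"
proof -
  have "h \<noteq> 0" using assms K_zero by auto
  have "\<exists>a. tr (h * a) = 0 \<and> tr a \<noteq> 0"
  proof (rule ccontr)
    assume "\<not> ?thesis"
    then obtain l where "l \<in> K" "1 = l * h" using mult_K_of_tr_orth[OF \<open>h \<noteq> 0\<close>, of 1] by auto
    then have "h = inverse l" using inverse_unique[of l h] by simp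
    then show False using assms K_inverse[OF \<open>l \<in> K\<close>] by simp
  qed
  then obtain a where a: "tr (h * a) = 0" "tr a \<noteq> 0" by auto
  have "\<exists>b. tr b = 0 \<and> tr (h * b) \<noteq> 0"
  proof (rule ccontr)
    assume "\<not> ?thesis"
    then obtain l where "l \<in> K" "h = l * 1" using mult_K_of_tr_orth[of 1 h] by auto
    then show False using assms by simp
  qed
  then obtain b where b: "tr b = 0" "tr (h * b) \<noteq> 0" by auto
  show thesis
  proof
    show "tr (inverse (tr a) * a) = 1" "tr (h * (inverse (tr a) * a)) = 0"
      using a by (simp_all add: tr_scale tr_scale' K_inverse tr_in_K)
    show "tr (inverse (tr (h * b)) * b) = 0" "tr (h * (inverse (tr (h * b)) * b)) = 1"
      using b by (simp_all add: tr_scale tr_scale' K_inverse tr_in_K)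
  qed
qed

definition span2 :: "'a \<Rightarrow> 'a set" where
  "span2 h = {x + h * y | x y. x \<in> K \<and> y \<in> K}"

definition annih :: "'a \<Rightarrow> 'a set" where
  "annih h = {a. tr a = 0 \<and> tr (h * a) = 0}"

lemma zero_in_span2: "0 \<in> span2 h"
  unfolding span2_def using K_zero by force

lemma span2_diff: "a \<in> span2 h \<Longrightarrow> b \<in> span2 h \<Longrightarrow> a - b \<in> span2 h"
proof -
  assume "a \<in> span2 h" "b \<in> span2 h"
  then obtain x y x' y' where "x \<in> K" "y \<in> K" "x' \<in> K" "y' \<in> K" "a = x + h * y" "b = x' + h * y'"
    by (auto simp: span2_def)
  moreover have "x + h * y - (x' + h * y') = (x - x') + h * (y - y')" by (simp add: algebra_simps)
  ultimately have "a - b = (x - x') + h * (y - y')" "x - x' \<in> K" "y - y' \<in> K"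
    by (simp_all add: K_diff)
  then show ?thesis unfolding span2_def by blast
qed

lemma card_span2:
  assumes "h \<notin> K"
  shows "card (span2 h) = Q ^ 2"
proof -
  have "inj_on (\<lambda>(x, y). x + h * y) (K \<times> K)"
  proof (rule inj_onI, clarsimp)
    fix x y x' y' assume "x \<in> K" "y \<in> K" "x' \<in> K" "y' \<in> K" and eq: "x + h * y = x' + h * y'"
    have "y = y'"
    proof (rule ccontr)
      assume "y \<noteq> y'"
      then have "h = (x' - x) / (y - y')" using eq by (simp add: field_simps)
      then show False using assms \<open>x \<in> K\<close> \<open>y \<in> K\<close> \<open>x' \<in> K\<close> \<open>y' \<in> K\<close>
        by (simp add: K_divide K_diff)
    qed
    then show "x = x' \<and> y = y'" using eq by simp
  qed
  moreover have "span2 h = (\<lambda>(x, y). x + h * y) ` (K \<times> K)" by (auto simp: span2_def)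
  ultimately show ?thesis by (simp add: card_image card_cartesian_product card_K power2_eq_square)
qed

lemma tr_mult_span2_annih: "c \<in> span2 h \<Longrightarrow> a \<in> annih h \<Longrightarrow> tr (a * c) = 0"
proof -
  assume "c \<in> span2 h" "a \<in> annih h"
  then obtain x y where xy: "x \<in> K" "y \<in> K" "c = x + h * y" "tr a = 0" "tr (h * a) = 0"
    by (auto simp: span2_def annih_def)
  have "a * c = x * a + y * (h * a)" using xy by (simp add: algebra_simps)
  then show ?thesis using xy by (simp add: tr_add tr_scale)
qed

lemma mem_span2_of_tr_orth:
  assumes h: "h \<notin> K" and orth: "\<And>a. a \<in> annih h \<Longrightarrow> tr (c * a) = 0"
  shows "c \<in> span2 h"
proof -
  obtain a1 a2 where a1: "tr a1 = 1" "tr (h * a1) = 0" and a2: "tr a2 = 0" "tr (h * a2) = 1"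
    using tr_dual_basis[OF h] .
  define l1 where "l1 = tr (c * a1)"
  define l2 where "l2 = tr (c * a2)"
  have l: "l1 \<in> K" "l2 \<in> K" by (simp_all add: l1_def l2_def tr_in_K)
  have "tr ((c - l1 - h * l2) * a) = 0" for a
  proof -
    define m1 where "m1 = tr a"
    define m2 where "m2 = tr (h * a)"
    have m: "m1 \<in> K" "m2 \<in> K" by (simp_all add: m1_def m2_def tr_in_K)
    define b where "b = a - m1 * a1 - m2 * a2"
    have "b \<in> annih h"
      using a1 a2 tr_scale[OF m(1), of a1] tr_scale[OF m(2), of a2]
        tr_scale'[OF m(1), of h a1] tr_scale'[OF m(2), of h a2]
      by (simp add: annih_def b_def tr_diff m1_def m2_def right_diff_distrib)
    then have "tr (c * b) = 0" by (rule orth)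
    then have "tr (c * a) = m1 * l1 + m2 * l2"
      using tr_scale'[OF m(1), of c a1] tr_scale'[OF m(2), of c a2]
      by (simp add: b_def tr_add tr_diff right_diff_distrib l1_def l2_def algebra_simps)
    moreover have "tr ((l1 + h * l2) * a) = l1 * m1 + l2 * m2"
      using tr_scale[OF l(1), of a] tr_scale'[OF l(2), of h a]
      by (simp add: distrib_right tr_add m1_def m2_def mult.assoc mult.left_commute)
    ultimately show ?thesis by (simp add: left_diff_distrib tr_diff algebra_simps)
  qed
  note orth_all = this
  have "c - l1 - h * l2 = 0"
  proof (rule ccontr)
    assume "c - l1 - h * l2 \<noteq> 0"
    then obtain a where "tr ((c - l1 - h * l2) * a) = 1" using tr_mult_eq_1 by blast
    then show False using orth_all[of a] by simp
  qed
  then have "c = l1 + h * l2" by (simp add: algebra_simps)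
  then show ?thesis using l by (auto simp: span2_def)
qed

lemma card_annih:
  assumes h: "h \<notin> K"
  shows "card (annih h) = Q ^ 2"
proof -
  have "h \<noteq> 0" using h K_zero by auto
  obtain a1 where a1: "tr a1 = 1" "tr (h * a1) = 0" using tr_dual_basis[OF h] by metis
  define V where "V = {a. tr (h * a) = 0}"
  have "card V = Q * card {a\<in>V. tr (1 * a) = 0}"
    by (rule card_eq_Q_mult_card_tr_kernel[of V a1 1])
      (use a1 in \<open>auto simp: V_def distrib_left right_diff_distrib tr_add tr_diff tr_scale'\<close>)
  moreover have "card V = Q ^ 3"
    using card_tr_mult_kernel[OF \<open>h \<noteq> 0\<close>] by (simp add: V_def mult.commute)
  moreover have "{a\<in>V. tr (1 * a) = 0} = annih h" by (auto simp: V_def annih_def)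
  ultimately have "Q * card (annih h) = Q ^ Suc 2" by simp
  then show ?thesis by (rule Q_mult_cancel)
qed

lemma card_annih_tr_orth:
  assumes h: "h \<notin> K" and c: "c \<notin> span2 h"
  shows "card {a \<in> annih h. tr (a * c) = 0} = Q"
proof -
  obtain a where a: "a \<in> annih h" "tr (c * a) \<noteq> 0"
    using mem_span2_of_tr_orth[OF h] c by blast
  define a1 where "a1 = inverse (tr (c * a)) * a"
  have il: "inverse (tr (c * a)) \<in> K" by (simp add: K_inverse tr_in_K)
  have a1: "a1 \<in> annih h" "tr (c * a1) = 1"
    using a tr_scale[OF il, of a] tr_scale'[OF il, of h a] tr_scale'[OF il, of c a]
    by (auto simp: a1_def annih_def)
  have "card (annih h) = Q * card {a \<in> annih h. tr (c * a) = 0}"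
    by (rule card_eq_Q_mult_card_tr_kernel[OF _ _ _ a1])
      (auto simp: annih_def distrib_left right_diff_distrib tr_add tr_diff tr_scale tr_scale')
  then have "card {a \<in> annih h. tr (c * a) = 0} = Q"
    using card_annih[OF h] Q_ge_2 by (simp add: power2_eq_square)
  then show ?thesis by (simp add: mult.commute)
qed

lemma image_pow_Q_minus_self: "{x ^ Q - x | x. True} = {y. tr y = 0}"
proof -
  define f where "f x = x ^ Q - x" for x :: 'a
  have "range f \<subseteq> {y. tr y = 0}" by (auto simp: f_def tr_diff tr_pow_Q)
  moreover have "card (range f) = card {y. tr y = 0}"
  proof -
    have "card (UNIV :: 'a set) = card (range f) * card {x\<in>UNIV. f x = 0}"
      by (rule card_eq_card_image_mult_card_kernel) (auto simp: f_def pow_Q_pow_add[where k = 1, simplified])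
    moreover have "{x\<in>UNIV. f x = 0} = K" by (auto simp: f_def mem_K_iff)
    ultimately have "Q * card (range f) = Q ^ Suc 3"
      using card_K q_eq by (simp add: q_def mult.commute)
    then have "card (range f) = Q ^ 3" by (rule Q_mult_cancel)
    then show ?thesis using card_tr_kernel by simp
  qed
  ultimately have "range f = {y. tr y = 0}" by (intro card_subset_eq) auto
  then show ?thesis by (auto simp: f_def)
qed

lemma image_pow_Q_minus_self_inter_eq_annih:
  assumes "h \<noteq> 0"
  shows "{x ^ Q - x | x. True} \<inter> {inverse h * z | z. z \<in> {x ^ Q - x | x. True}} = annih h"
proof -
  have "{inverse h * z | z. tr z = 0} = {a. tr (h * a) = 0}"
  proof (intro equalityI subsetI)
    fix a assume "a \<in> {inverse h * z | z. tr z = 0}"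
    then obtain z where "tr z = 0" "a = inverse h * z" by blast
    then show "a \<in> {a. tr (h * a) = 0}" using assms by (simp flip: mult.assoc)
  next
    fix a assume "a \<in> {a. tr (h * a) = 0}"
    then show "a \<in> {inverse h * z | z. tr z = 0}"
      using assms by (intro CollectI exI[of _ "h * a"]) (simp flip: mult.assoc)
  qed
  then show ?thesis unfolding image_pow_Q_minus_self mem_Collect_eq by (auto simp: annih_def)
qed

end

locale peisert_setting = quartic_extension +
  assumes p_mod_4: "p mod 4 = 3"
begin

lemma p_odd: "odd p"
  using p_mod_4 by presburger

lemma Q_odd: "odd Q"
  using p_odd by (simp add: Q_def)

definition t :: nat where "t = Q div 2"

lemma Q_eq_t: "Q = 2 * t + 1"
  using Q_odd by (simp add: t_def)

definition e :: nat where "e = (q - 1) div 4"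

text \<open>\<open>M = (Q + 1) (Q\<^sup>2 + 1) / 4\<close>, so that \<open>e = (Q - 1) M\<close>.\<close>
definition M :: nat where "M = (t + 1) * (2 * t ^ 2 + 2 * t + 1)"

lemma q_minus_one_eq_4e: "q - 1 = 4 * e" and e_eq: "e = (Q - 1) * M"
proof -
  have "int q = (2 * int t + 1) ^ 4" using q_eq Q_eq_t by (simp add: add.commute)
  then have "int q - 1 = 4 * ((2 * int t) * ((int t + 1) * (2 * int t ^ 2 + 2 * int t + 1)))"
    by (simp add: power2_eq_square power4_eq_xxxx algebra_simps)
  also have "\<dots> = int (4 * ((Q - 1) * M))"
    using Q_eq_t by (simp add: M_def power2_eq_square algebra_simps)
  finally have "q - 1 = 4 * ((Q - 1) * M)" using q_minus_one_pos by linarith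
  then show "q - 1 = 4 * e" "e = (Q - 1) * M" by (simp_all add: e_def)
qed

lemma e_pos: "e > 0"
  using q_minus_one_eq_4e q_minus_one_pos by simp

definition iota :: 'a where "iota = g ^ e"

definition chi :: "'a \<Rightarrow> 'a" where "chi x = x ^ e"

lemma two_ne_zero: "(2 :: 'a) \<noteq> 0"
proof
  assume "(2 :: 'a) = 0"
  then have "p dvd 2" using CHAR_eq by (metis of_nat_eq_0_iff_char_dvd of_nat_numeral)
  then have "p \<le> 2" by (simp add: dvd_imp_le)
  then show False using prime_ge_2_nat[OF prime_p] p_odd by simp
qed

lemma iota_sq: "iota ^ 2 = -1"
proof -
  have "(iota ^ 2) ^ 2 = 1"
    using q_minus_one_eq_4e pow_q_minus_one[OF g_ne_0] by (simp add: iota_def mult.commute flip: power_mult)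
  moreover have "iota ^ 2 \<noteq> 1"
  proof
    assume "iota ^ 2 = 1"
    then have "(q - 1) dvd (e * 2)" by (simp add: iota_def g_pow_eq_1_iff flip: power_mult)
    then show False using q_minus_one_eq_4e e_pos by (auto dest: dvd_imp_le)
  qed
  ultimately show ?thesis using power2_eq_1_iff[of "iota ^ 2"] by blast
qed

lemma iota_distinct:
  "(1 :: 'a) \<noteq> -1" "iota \<noteq> 1" "iota \<noteq> -1" "iota \<noteq> - iota" "- iota \<noteq> 1" "- iota \<noteq> -1" "iota \<noteq> 0"
proof -
  show "(1 :: 'a) \<noteq> -1" using two_ne_zero by (metis one_add_one neg_eq_iff_add_eq_0)
  then show "iota \<noteq> 1" "iota \<noteq> -1" "iota \<noteq> 0" using iota_sq by (auto simp: power2_eq_square)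
  then show "- iota \<noteq> 1" "- iota \<noteq> -1" by (auto simp: minus_equation_iff[of iota])
  show "iota \<noteq> - iota"
  proof
    assume "iota = - iota"
    then have "2 * iota = 0" by (metis mult_2 add.right_inverse)
    then show False using \<open>iota \<noteq> 0\<close> two_ne_zero by simp
  qed
qed

lemma iota_pow_mod_4: "iota ^ k = iota ^ (k mod 4)"
proof -
  have "iota ^ 4 = 1" using iota_sq by (simp add: power4_eq_xxxx power2_eq_square)
  have "iota ^ k = iota ^ (4 * (k div 4) + k mod 4)" by simp
  also have "\<dots> = iota ^ (k mod 4)"
    by (simp only: power_add power_mult \<open>iota ^ 4 = 1\<close> power_one mult_1_left)
  finally show ?thesis .
qed

lemma iota_pow_eq_iff:
  "iota ^ k = 1 \<longleftrightarrow> k mod 4 = 0" "iota ^ k = iota \<longleftrightarrow> k mod 4 = 1"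
  "iota ^ k = -1 \<longleftrightarrow> k mod 4 = 2" "iota ^ k = - iota \<longleftrightarrow> k mod 4 = 3"
proof -
  have "iota ^ 3 = - iota" using iota_sq by (simp add: power3_eq_cube power2_eq_square)
  moreover have "k mod 4 = 0 \<or> k mod 4 = 1 \<or> k mod 4 = 2 \<or> k mod 4 = 3" by linarith
  ultimately show "iota ^ k = 1 \<longleftrightarrow> k mod 4 = 0" "iota ^ k = iota \<longleftrightarrow> k mod 4 = 1"
    "iota ^ k = -1 \<longleftrightarrow> k mod 4 = 2" "iota ^ k = - iota \<longleftrightarrow> k mod 4 = 3"
    using iota_pow_mod_4[of k] iota_sq iota_distinct by (auto simp: eq_commute[of "-1" "- iota"])
qed

lemma chi_g_pow: "chi (g ^ k) = iota ^ k"
  by (simp add: chi_def iota_def mult.commute flip: power_mult)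

lemma chi_mult: "chi (x * y) = chi x * chi y"
  by (simp add: chi_def power_mult_distrib)

lemma chi_nonzero: "x \<noteq> 0 \<Longrightarrow> chi x \<noteq> 0"
  by (simp add: chi_def)

lemma chi_cases:
  assumes "x \<noteq> 0"
  obtains "chi x = 1" | "chi x = iota" | "chi x = -1" | "chi x = - iota"
proof -
  obtain k where "x = g ^ k" using assms primitive_g by (auto simp: primitive_root_def)
  moreover have "k mod 4 = 0 \<or> k mod 4 = 1 \<or> k mod 4 = 2 \<or> k mod 4 = 3" by linarith
  ultimately show thesis using that iota_pow_eq_iff[of k] by (auto simp: chi_g_pow)
qed

lemma chi_K: "l \<in> K \<Longrightarrow> l \<noteq> 0 \<Longrightarrow> chi l = 1"
proof -
  assume "l \<in> K" "l \<noteq> 0"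
  then have "l * l ^ (Q - 1) = l * 1" using Q_ge_2 by (simp add: mem_K_iff flip: power_Suc)
  then have "l ^ (Q - 1) = 1" using \<open>l \<noteq> 0\<close> by simp
  then show ?thesis by (simp add: chi_def e_eq power_mult)
qed

lemma chi_pow: "chi (x ^ n) = chi x ^ n"
  by (simp add: chi_def mult.commute flip: power_mult)

text \<open>This is where \<open>p mod 4 = 3\<close> enters: \<open>iota ^ p = - iota\<close>.\<close>
lemma chi_pow_p_swap:
  "chi x = iota \<Longrightarrow> chi (x ^ p) = - iota" "chi x = - iota \<Longrightarrow> chi (x ^ p) = iota"
proof -
  have "iota ^ p = - iota" using iota_pow_eq_iff(4)[of p] p_mod_4 by simp
  then show "chi x = iota \<Longrightarrow> chi (x ^ p) = - iota" "chi x = - iota \<Longrightarrow> chi (x ^ p) = iota"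
    using p_odd by (auto simp: chi_pow power_minus_odd)
qed

lemma chi_pow_Q_pow: "chi x = 1 \<or> chi x = -1 \<Longrightarrow> chi (x ^ (Q ^ k)) = chi x"
  using Q_odd by (auto simp: chi_pow power_minus_odd)

lemma peisert_adj_iff: "peisert_adj g x y \<longleftrightarrow> x \<noteq> y \<and> (chi (x - y) = 1 \<or> chi (x - y) = iota)"
proof
  assume "peisert_adj g x y"
  then have "x \<noteq> y" "\<exists>j. (j mod 4 = 0 \<or> j mod 4 = 1) \<and> x - y = g ^ j"
    unfolding peisert_adj_def by simp_all
  then obtain j where "x \<noteq> y" "j mod 4 = 0 \<or> j mod 4 = 1" "x - y = g ^ j" by metis
  then show "x \<noteq> y \<and> (chi (x - y) = 1 \<or> chi (x - y) = iota)"
    using iota_pow_eq_iff[of j] by (auto simp: chi_g_pow)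
next
  assume adj: "x \<noteq> y \<and> (chi (x - y) = 1 \<or> chi (x - y) = iota)"
  then obtain k where k: "x - y = g ^ k"
    using primitive_g unfolding primitive_root_def by (metis right_minus_eq)
  then have "k mod 4 = 0 \<or> k mod 4 = 1" using adj iota_pow_eq_iff[of k] by (auto simp: chi_g_pow)
  then show "peisert_adj g x y"
    unfolding peisert_adj_def using adj k by (intro conjI exI[of _ k]) simp_all
qed

lemma chi_class_eq_image:
  assumes "j < 4"
  shows "{x. x \<noteq> 0 \<and> chi x = iota ^ j} = (\<lambda>k. g ^ (4 * k + j)) ` {..<e}"
proof
  have "iota ^ (4 * k + j) = iota ^ j" for k
    using iota_pow_mod_4[of "4 * k + j"] iota_pow_mod_4[of j] by simp
  then show "(\<lambda>k. g ^ (4 * k + j)) ` {..<e} \<subseteq> {x. x \<noteq> 0 \<and> chi x = iota ^ j}"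
    using g_ne_0 by (auto simp: chi_g_pow)
  show "{x. x \<noteq> 0 \<and> chi x = iota ^ j} \<subseteq> (\<lambda>k. g ^ (4 * k + j)) ` {..<e}"
  proof
    fix x assume x: "x \<in> {x. x \<noteq> 0 \<and> chi x = iota ^ j}"
    then obtain k where "x = g ^ k" using primitive_g by (auto simp: primitive_root_def)
    define k' where "k' = k mod (4 * e)"
    have xk': "x = g ^ k'" using \<open>x = g ^ k\<close> g_pow_mod q_minus_one_eq_4e by (simp add: k'_def)
    then have "iota ^ k' = iota ^ j" using x by (simp add: chi_g_pow)
    moreover have "j = 0 \<or> j = 1 \<or> j = 2 \<or> j = 3" using assms by auto
    ultimately have "k' mod 4 = j" using iota_pow_eq_iff[of k'] iota_sq
      by (auto simp: power3_eq_cube power2_eq_square)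
    then have "k' = 4 * (k' div 4) + j" by presburger
    moreover have "k' < e * 4" using e_pos by (simp add: k'_def mult.commute)
    then have "k' div 4 < e" by (rule less_mult_imp_div_less)
    ultimately show "x \<in> (\<lambda>k. g ^ (4 * k + j)) ` {..<e}"
      using xk' by (intro image_eqI[of _ _ "k' div 4"]) auto
  qed
qed

lemma card_chi_class: "j < 4 \<Longrightarrow> card {x. x \<noteq> 0 \<and> chi x = iota ^ j} = e"
proof -
  assume j: "j < 4"
  have "inj_on (\<lambda>k. g ^ (4 * k + j)) {..<e}"
  proof (rule inj_onI)
    fix a b assume "a \<in> {..<e}" "b \<in> {..<e}" "g ^ (4 * a + j) = g ^ (4 * b + j)"
    then show "a = b" using j q_minus_one_eq_4e g_pow_eq_iff by simp
  qed
  then show ?thesis by (simp add: chi_class_eq_image[OF j] card_image)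
qed

lemma card_chi_values:
  "card {x. x \<noteq> 0 \<and> chi x = 1} = e" "card {x. x \<noteq> 0 \<and> chi x = iota} = e"
  "card {x. x \<noteq> 0 \<and> chi x = -1} = e" "card {x. x \<noteq> 0 \<and> chi x = - iota} = e"
  using card_chi_class[of 0] card_chi_class[of 1] card_chi_class[of 2] card_chi_class[of 3] iota_sq
  by (simp_all add: power3_eq_cube power2_eq_square)

lemma card_chi_two_values:
  assumes "z1 \<noteq> z2"
  shows "card {y. P y \<and> (chi y = z1 \<or> chi y = z2)} = card {y. P y \<and> chi y = z1} + card {y. P y \<and> chi y = z2}"
proof -
  have "{y. P y \<and> (chi y = z1 \<or> chi y = z2)} = {y. P y \<and> chi y = z1} \<union> {y. P y \<and> chi y = z2}" by auto
  then show ?thesis using assms by (simp add: card_Un_disjoint disjoint_iff)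
qed

definition Cset :: "'a set" where "Cset = {x. x \<noteq> 0 \<and> (chi x = 1 \<or> chi x = iota)}"
definition Dset :: "'a set" where "Dset = {x. x \<noteq> 0 \<and> (chi x = iota \<or> chi x = -1)}"
definition Bset :: "'a set" where "Bset = {x. x \<noteq> 0 \<and> (chi x = 1 \<or> chi x = - iota)}"

lemma card_Cset: "card Cset = 2 * e"
  using card_chi_two_values[OF iota_distinct(2)[symmetric], of "\<lambda>x. x \<noteq> 0"] card_chi_values
  by (simp add: Cset_def)

lemma card_Dset: "card Dset = 2 * e"
  using card_chi_two_values[OF iota_distinct(3), of "\<lambda>x. x \<noteq> 0"] card_chi_values
  by (simp add: Dset_def)

lemma card_Bset: "card Bset = 2 * e"
  using card_chi_two_values[OF iota_distinct(5)[symmetric], of "\<lambda>x. x \<noteq> 0"] card_chi_values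
  by (simp add: Bset_def)

lemma nonzero_eq_Dset_Un_Bset: "UNIV - {0} = Dset \<union> Bset"
  by (auto simp: Dset_def Bset_def elim: chi_cases)

lemma Dset_Bset_disjoint: "Dset \<inter> Bset = {}"
  using iota_distinct by (auto simp: Dset_def Bset_def)

definition ker_count :: "'a \<Rightarrow> nat" where
  "ker_count z = card {y. tr y = 0 \<and> y \<noteq> 0 \<and> chi y = z}"

definition orth_count :: "'a \<Rightarrow> nat" where
  "orth_count a = card {c \<in> Cset. tr (a * c) = 0}"

lemma orth_count_eq_sum: "orth_count a = (\<Sum>c\<in>Cset. of_bool (tr (a * c) = 0))"
  by (simp add: orth_count_def Int_def)

lemma ker_count_sum: "ker_count 1 + ker_count iota + ker_count (-1) + ker_count (- iota) = Q ^ 3 - 1"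
proof -
  have "{y. tr y = 0} - {0} = {y. tr y = 0 \<and> y \<noteq> 0 \<and> chi y = 1} \<union> {y. tr y = 0 \<and> y \<noteq> 0 \<and> chi y = iota}
      \<union> {y. tr y = 0 \<and> y \<noteq> 0 \<and> chi y = -1} \<union> {y. tr y = 0 \<and> y \<noteq> 0 \<and> chi y = - iota}"
    by (auto elim: chi_cases)
  then have "card ({y. tr y = 0} - {0}) = ker_count 1 + ker_count iota + ker_count (-1) + ker_count (- iota)"
    unfolding ker_count_def using iota_distinct by (simp add: card_Un_disjoint disjoint_iff)
  then show ?thesis using card_tr_kernel tr_zero by simp
qed

lemma ker_count_iota_eq: "ker_count iota = ker_count (- iota)"
proof -
  have "ker_count z1 \<le> ker_count z2" if swap: "\<And>y. chi y = z1 \<Longrightarrow> chi (y ^ p) = z2" for z1 z2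
  proof -
    have "inj_on (\<lambda>x. x ^ p) {y. tr y = 0 \<and> y \<noteq> 0 \<and> chi y = z1}"
      using pow_p_pow_inj[of 1] by (simp add: inj_on_def inj_def)
    moreover have "(\<lambda>x. x ^ p) ` {y. tr y = 0 \<and> y \<noteq> 0 \<and> chi y = z1} \<subseteq> {y. tr y = 0 \<and> y \<noteq> 0 \<and> chi y = z2}"
      using swap prime_gt_0_nat[OF prime_p] by (auto simp: tr_pow_p)
    ultimately show ?thesis unfolding ker_count_def by (intro card_inj_on_le) auto
  qed
  then show ?thesis using chi_pow_p_swap by (metis antisym)
qed

lemma orth_count_eq:
  assumes "a \<noteq> 0"
  shows "orth_count a = ker_count (chi a) + ker_count (chi a * iota)"
proof -
  have "bij_betw (\<lambda>c. a * c) {c \<in> Cset. tr (a * c) = 0}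
      {y. (tr y = 0 \<and> y \<noteq> 0) \<and> (chi y = chi a \<or> chi y = chi a * iota)}"
  proof (rule bij_betw_byWitness[where f' = "\<lambda>y. y / a"])
    show "(\<lambda>c. a * c) ` {c \<in> Cset. tr (a * c) = 0}
        \<subseteq> {y. (tr y = 0 \<and> y \<noteq> 0) \<and> (chi y = chi a \<or> chi y = chi a * iota)}"
      using assms by (auto simp: Cset_def chi_mult)
    show "(\<lambda>y. y / a) ` {y. (tr y = 0 \<and> y \<noteq> 0) \<and> (chi y = chi a \<or> chi y = chi a * iota)}
        \<subseteq> {c \<in> Cset. tr (a * c) = 0}"
    proof
      fix z assume "z \<in> (\<lambda>y. y / a) ` {y. (tr y = 0 \<and> y \<noteq> 0) \<and> (chi y = chi a \<or> chi y = chi a * iota)}"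
      then obtain y where y: "tr y = 0" "y \<noteq> 0" "chi y = chi a \<or> chi y = chi a * iota" "z = y / a"
        by auto
      have "chi y = chi a * chi z" using assms y(4) chi_mult[of a z] by simp
      then have "chi z = 1 \<or> chi z = iota" using y(3) chi_nonzero[OF assms] by auto
      then show "z \<in> {c \<in> Cset. tr (a * c) = 0}" using y assms by (auto simp: Cset_def)
    qed
  qed (use assms in simp_all)
  then have "orth_count a = card {y. (tr y = 0 \<and> y \<noteq> 0) \<and> (chi y = chi a \<or> chi y = chi a * iota)}"
    unfolding orth_count_def by (rule bij_betw_same_card)
  also have "\<dots> = ker_count (chi a) + ker_count (chi a * iota)"
    using chi_nonzero[OF assms] iota_distinct(2)
    by (subst card_chi_two_values) (auto simp: ker_count_def)
  finally show ?thesis .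
qed

definition X :: nat where "X = ker_count (-1) + ker_count iota"
definition Y :: nat where "Y = ker_count 1 + ker_count iota"

lemma orth_count_Dset: "a \<in> Dset \<Longrightarrow> orth_count a = X"
  using orth_count_eq[of a] ker_count_iota_eq iota_sq by (auto simp: Dset_def X_def power2_eq_square)

lemma orth_count_Bset: "a \<in> Bset \<Longrightarrow> orth_count a = Y"
  using orth_count_eq[of a] ker_count_iota_eq iota_sq by (auto simp: Bset_def Y_def power2_eq_square)

lemma X_plus_Y: "X + Y = Q ^ 3 - 1"
  using ker_count_sum ker_count_iota_eq by (simp add: X_def Y_def)

lemma sum_orth_count_sq: "(\<Sum>a\<in>UNIV - {0}. orth_count a ^ 2) = 2 * e * (X ^ 2 + Y ^ 2)"
proof -
  have "(\<Sum>a\<in>UNIV - {0}. orth_count a ^ 2) = (\<Sum>a\<in>Dset. orth_count a ^ 2) + (\<Sum>a\<in>Bset. orth_count a ^ 2)"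
    unfolding nonzero_eq_Dset_Un_Bset by (rule sum.union_disjoint) (use Dset_Bset_disjoint in auto)
  also have "\<dots> = (\<Sum>a\<in>Dset. X ^ 2) + (\<Sum>a\<in>Bset. Y ^ 2)"
    by (simp add: orth_count_Dset orth_count_Bset)
  finally show ?thesis using card_Dset card_Bset by (simp add: algebra_simps)
qed

lemma card_common_tr_kernel:
  assumes "c \<noteq> 0" "c' \<noteq> 0"
  shows "card {a. tr (a * c) = 0 \<and> tr (a * c') = 0} = (if \<exists>l\<in>K. c' = l * c then Q ^ 3 else Q ^ 2)"
proof (cases "\<exists>l\<in>K. c' = l * c")
  case True
  then obtain l where "l \<in> K" "c' = l * c" by auto
  then have "{a. tr (a * c) = 0 \<and> tr (a * c') = 0} = {a. tr (a * c) = 0}"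
    using tr_scale'[of l _ c] by (auto simp: mult.left_commute)
  then show ?thesis using True card_tr_mult_kernel[OF assms(1)] by simp
next
  case False
  define h where "h = c' / c"
  have "h \<notin> K"
  proof
    assume "h \<in> K"
    moreover have "c' = h * c" using assms by (simp add: h_def)
    ultimately show False using False by blast
  qed
  have "bij_betw (\<lambda>a. a * c) {a. tr (a * c) = 0 \<and> tr (a * c') = 0} (annih h)"
    by (rule bij_betw_byWitness[where f' = "\<lambda>x. x / c"])
      (use assms in \<open>auto simp: h_def annih_def mult.commute\<close>)
  then have "card {a. tr (a * c) = 0 \<and> tr (a * c') = 0} = Q ^ 2"
    using card_annih[OF \<open>h \<notin> K\<close>] by (simp add: bij_betw_same_card)
  then show ?thesis using False by simp
qed

lemma sum_orth_count_sq_eq_sum_common: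
  "(\<Sum>a\<in>UNIV - {0}. orth_count a ^ 2)
    = (\<Sum>c\<in>Cset. \<Sum>c'\<in>Cset. card {a. tr (a * c) = 0 \<and> tr (a * c') = 0} - 1)"
proof -
  define ind where "ind a c = (of_bool (tr (a * c) = 0) :: nat)" for a c
  have "orth_count a = (\<Sum>c\<in>Cset. ind a c)" for a by (simp add: orth_count_eq_sum ind_def)
  then have "(\<Sum>a\<in>UNIV - {0}. orth_count a ^ 2) = (\<Sum>a\<in>UNIV - {0}. \<Sum>c\<in>Cset. \<Sum>c'\<in>Cset. ind a c * ind a c')"
    by (simp only: power2_eq_square sum_product)
  also have "\<dots> = (\<Sum>c\<in>Cset. \<Sum>c'\<in>Cset. \<Sum>a\<in>UNIV - {0}. ind a c * ind a c')"
    by (subst sum.swap) (simp add: sum.swap[of _ "UNIV - {0}"])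
  also have "\<dots> = (\<Sum>c\<in>Cset. \<Sum>c'\<in>Cset. card {a. tr (a * c) = 0 \<and> tr (a * c') = 0} - 1)"
  proof (intro sum.cong refl)
    fix c c'
    have "(\<Sum>a\<in>UNIV - {0}. ind a c * ind a c') = card ({a. tr (a * c) = 0 \<and> tr (a * c') = 0} - {0})"
      by (simp add: ind_def Int_def Diff_eq conj_ac)
    then show "(\<Sum>a\<in>UNIV - {0}. ind a c * ind a c') = card {a. tr (a * c) = 0 \<and> tr (a * c') = 0} - 1"
      using tr_zero by simp
  qed
  finally show ?thesis .
qed

lemma sum_common_tr_kernel:
  assumes "c \<in> Cset"
  shows "(\<Sum>c'\<in>Cset. card {a. tr (a * c) = 0 \<and> tr (a * c') = 0} - 1)
    = (Q - 1) * (Q ^ 3 - 1) + (2 * e - (Q - 1)) * (Q ^ 2 - 1)"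
proof -
  have "c \<noteq> 0" using assms by (simp add: Cset_def)
  define L where "L = {c' \<in> Cset. \<exists>l\<in>K. c' = l * c}"
  have "L = (\<lambda>l. l * c) ` (K - {0})"
    using assms \<open>c \<noteq> 0\<close> by (auto simp: L_def Cset_def chi_mult chi_K)
  then have card_L: "card L = Q - 1"
    using \<open>c \<noteq> 0\<close> card_K_minus_zero by (simp add: card_image inj_on_def)
  have "L \<subseteq> Cset" by (auto simp: L_def)
  then have "(\<Sum>c'\<in>Cset. card {a. tr (a * c) = 0 \<and> tr (a * c') = 0} - 1)
      = (\<Sum>c'\<in>L. card {a. tr (a * c) = 0 \<and> tr (a * c') = 0} - 1)
        + (\<Sum>c'\<in>Cset - L. card {a. tr (a * c) = 0 \<and> tr (a * c') = 0} - 1)"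
    by (simp add: sum.subset_diff add.commute)
  also have "\<dots> = (\<Sum>c'\<in>L. Q ^ 3 - 1) + (\<Sum>c'\<in>Cset - L. Q ^ 2 - 1)"
    using \<open>c \<noteq> 0\<close> by (intro arg_cong2[where f = "(+)"] sum.cong)
      (auto simp: L_def Cset_def card_common_tr_kernel)
  finally show ?thesis using card_L card_Cset \<open>L \<subseteq> Cset\<close> by (simp add: card_Diff_subset)
qed

lemma X_sq_plus_Y_sq: "X ^ 2 + Y ^ 2 = (Q - 1) * (Q ^ 3 - 1) + (2 * e - (Q - 1)) * (Q ^ 2 - 1)"
proof -
  have "2 * e * (X ^ 2 + Y ^ 2) = (\<Sum>c\<in>Cset. (Q - 1) * (Q ^ 3 - 1) + (2 * e - (Q - 1)) * (Q ^ 2 - 1))"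
    using sum_orth_count_sq sum_orth_count_sq_eq_sum_common sum_common_tr_kernel by simp
  also have "\<dots> = 2 * e * ((Q - 1) * (Q ^ 3 - 1) + (2 * e - (Q - 1)) * (Q ^ 2 - 1))"
    using card_Cset by simp
  finally have "2 * e * (X ^ 2 + Y ^ 2) = 2 * e * ((Q - 1) * (Q ^ 3 - 1) + (2 * e - (Q - 1)) * (Q ^ 2 - 1))" .
  moreover have "2 * e \<noteq> 0" using e_pos by simp
  ultimately show ?thesis using mult_left_cancel by blast
qed

lemma X_minus_Y_sq: "(int X - int Y) ^ 2 = (int Q * (int Q - 1)) ^ 2"
proof -
  have "Q - 1 \<le> 2 * e" using Q_eq_t e_eq by (simp add: M_def)
  moreover have "1 \<le> Q ^ 2" "1 \<le> Q ^ 3" using Q_ge_2 by simp_all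
  ultimately have sq: "int X ^ 2 + int Y ^ 2
      = (int Q - 1) * (int Q ^ 3 - 1) + (2 * int e - (int Q - 1)) * (int Q ^ 2 - 1)"
    using X_sq_plus_Y_sq Q_ge_2 by (simp flip: of_nat_power add: of_nat_diff of_nat_add[symmetric])
  have "int (X + Y) = int (Q ^ 3 - 1)" using X_plus_Y by simp
  then have sum: "int X + int Y = int Q ^ 3 - 1" using \<open>1 \<le> Q ^ 3\<close> by (simp add: of_nat_diff)
  have "int (q - 1) = int (4 * e)" using q_minus_one_eq_4e by simp
  then have e4: "4 * int e = int Q ^ 4 - 1" using q_eq q_minus_one_pos by (simp add: of_nat_diff)
  have "(int X - int Y) ^ 2 = 2 * (int X ^ 2 + int Y ^ 2) - (int X + int Y) ^ 2"
    by (simp add: power2_eq_square algebra_simps)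
  also have "\<dots> = 2 * (int Q - 1) * (int Q ^ 3 - 1) + (4 * int e - 2 * (int Q - 1)) * (int Q ^ 2 - 1)
      - (int Q ^ 3 - 1) ^ 2"
    unfolding sq sum by (simp add: algebra_simps)
  also have "\<dots> = (int Q * (int Q - 1)) ^ 2"
    unfolding e4 by (simp add: power2_eq_square power3_eq_cube power4_eq_xxxx algebra_simps)
  finally show ?thesis .
qed

definition Eset :: "'a set" where "Eset = {y. y \<noteq> 0 \<and> y ^ Q = - y}"

lemma Eset_pow_Q_pow: "y \<in> Eset \<Longrightarrow> y ^ (Q ^ n) \<in> Eset"
proof (induction n)
  case (Suc n)
  then show ?case using pow_Q_pow_Suc[of y n] pow_Q_pow_diff[of 0 "y ^ Q ^ n" 1] Q_ge_2
    by (auto simp: Eset_def)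
qed simp

lemma Eset_scale: "l \<in> K \<Longrightarrow> l \<noteq> 0 \<Longrightarrow> y \<in> Eset \<Longrightarrow> l * y \<in> Eset"
  by (auto simp: Eset_def power_mult_distrib mem_K_iff)

lemma tr_Eset: "y \<in> Eset \<Longrightarrow> tr y = 0"
proof -
  assume "y \<in> Eset"
  then have y1: "y ^ Q = - y" by (simp add: Eset_def)
  have neg: "(- x) ^ Q = - (x ^ Q)" for x :: 'a using pow_Q_pow_diff[of 0 x 1] Q_ge_2 by simp
  have y2: "y ^ (Q ^ 2) = y" using y1 neg by (simp add: power2_eq_square power_mult)
  have "y ^ (Q ^ 3) = - y" using y1 y2 neg by (simp add: power3_eq_cube power_mult)
  then show ?thesis using y1 y2 by (simp add: tr_def)
qed

text \<open>\<open>w\<close> has order \<open>2 (Q - 1)\<close>, so \<open>w\<^sup>Q\<^sup>-\<^sup>1 = -1\<close>.\<close>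
definition w :: 'a where "w = g ^ (2 * M)"

lemma w_in_Eset: "w \<in> Eset"
proof -
  have "w ^ (Q - 1) = iota ^ 2" by (simp add: w_def iota_def e_eq mult_ac flip: power_mult)
  then have "w * w ^ (Q - 1) = w * (-1)" using iota_sq by simp
  then have "w ^ Q = - w" using Q_ge_2 by (simp flip: power_Suc)
  then show ?thesis using g_ne_0 by (simp add: Eset_def w_def)
qed

lemma Eset_eq_image: "Eset = (\<lambda>l. l * w) ` (K - {0})"
proof
  have w: "w \<noteq> 0" "w ^ Q = - w" using w_in_Eset by (auto simp: Eset_def)
  show "Eset \<subseteq> (\<lambda>l. l * w) ` (K - {0})"
  proof
    fix y assume y: "y \<in> Eset"
    then have "y / w \<in> K - {0}" using w by (auto simp: Eset_def mem_K_iff power_divide)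
    then show "y \<in> (\<lambda>l. l * w) ` (K - {0})" using w by (intro image_eqI[of _ _ "y / w"]) auto
  qed
  show "(\<lambda>l. l * w) ` (K - {0}) \<subseteq> Eset" using Eset_scale w_in_Eset by auto
qed

lemma card_Eset: "card Eset = Q - 1"
proof -
  have "w \<noteq> 0" using w_in_Eset by (simp add: Eset_def)
  then have "inj_on (\<lambda>l. l * w) (K - {0})" by (auto simp: inj_on_def)
  then show ?thesis using Eset_eq_image card_K_minus_zero by (simp add: card_image)
qed

definition chi_E :: 'a where "chi_E = (if even t then -1 else 1)"

lemma chi_Eset: "y \<in> Eset \<Longrightarrow> chi y = chi_E"
proof -
  assume "y \<in> Eset"
  then obtain l where "l \<in> K" "l \<noteq> 0" "y = l * w" using Eset_eq_image by auto
  then have "chi y = iota ^ (2 * M)" by (simp add: chi_mult chi_K w_def chi_g_pow)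
  moreover have "(2 * M) mod 4 = (if even t then 2 else 0)"
  proof -
    have "even M \<longleftrightarrow> odd t" by (simp add: M_def)
    moreover have "(2 * M) mod 4 = 2 * (M mod 2)" using mod_mult_mult1[of 2 M 2] by simp
    ultimately show ?thesis by (auto simp: even_iff_mod_2_eq_zero odd_iff_mod_2_eq_one)
  qed
  ultimately show ?thesis using iota_pow_eq_iff(1,3)[of "2 * M"] by (simp add: chi_E_def split: if_splits)
qed

lemma pow_Q_pow_twice:
  assumes "l \<in> K" "(y :: 'a) ^ (Q ^ d) = l * y"
  shows "y ^ (Q ^ (2 * d)) = l ^ 2 * y"
proof -
  have "y ^ (Q ^ (2 * d)) = (y ^ (Q ^ d)) ^ (Q ^ d)" by (simp add: mult_2 power_add power_mult)
  also have "\<dots> = l ^ 2 * y" using assms K_pow_Q_pow[OF assms(1)] by (simp add: power_mult_distrib power2_eq_square)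
  finally show ?thesis .
qed

lemma mem_Eset_of_pow_Q_sq:
  assumes "y \<noteq> 0" "chi y = 1 \<or> chi y = -1" "tr y = 0" and "v \<in> K" "y ^ (Q ^ 2) = v * y"
  shows "y \<in> Eset"
proof -
  have "y = y ^ (Q ^ (2 * 2))" using pow_Q4 by simp
  also have "\<dots> = v ^ 2 * y" using pow_Q_pow_twice[OF assms(4,5)] .
  finally have "v ^ 2 = 1" using assms(1) by (metis mult_cancel_right2)
  moreover have "v \<noteq> -1"
  proof
    assume "v = -1"
    then have "y * y ^ (Q ^ 2 - 1) = y * (-1)" using assms(5) Q_ge_2 by (simp flip: power_Suc)
    then have "y ^ (Q ^ 2 - 1) = -1" using assms(1) by (metis mult_left_cancel)
    have "2 * e = (Q ^ 2 - 1) * (2 * t ^ 2 + 2 * t + 1)"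
    proof -
      have "Q ^ 2 - 1 = 4 * t * (t + 1)" using Q_eq_t by (simp add: power2_eq_square algebra_simps)
      then show ?thesis using e_eq Q_eq_t by (simp add: M_def algebra_simps)
    qed
    have "chi y ^ 2 = y ^ (2 * e)" by (simp add: chi_def mult.commute flip: power_mult)
    also have "\<dots> = (y ^ (Q ^ 2 - 1)) ^ (2 * t ^ 2 + 2 * t + 1)"
      by (simp only: \<open>2 * e = _\<close> power_mult)
    also have "\<dots> = -1" using \<open>y ^ (Q ^ 2 - 1) = -1\<close> by simp
    finally show False using assms(2) iota_distinct(1) by auto
  qed
  ultimately have "y ^ (Q ^ 2) = y" using assms(5) power2_eq_1_iff[of v] by auto
  then have "y ^ (Q ^ 3) = y ^ Q" using pow_Q_pow_Suc[of y 2] by (simp add: numeral_3_eq_3)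
  then have "2 * (y + y ^ Q) = 0" using assms(3) \<open>y ^ (Q ^ 2) = y\<close> by (simp add: tr_def algebra_simps)
  then have "y + y ^ Q = 0" using two_ne_zero by (metis mult_eq_0_iff)
  then have "y ^ Q = - y" by (simp add: eq_neg_iff_add_eq_0 add.commute)
  then show ?thesis using assms(1) by (simp add: Eset_def)
qed

lemma mem_Eset_of_pow_Q_pow:
  assumes "y \<noteq> 0" "chi y = 1 \<or> chi y = -1" "tr y = 0"
    and "c \<in> K" "0 < d" "d < 4" "y ^ (Q ^ d) = c * y"
  shows "y \<in> Eset"
proof (cases "d = 2")
  case True
  then show ?thesis using assms mem_Eset_of_pow_Q_sq by simp
next
  case False
  then have "2 * d mod 4 = 2" using assms(5,6) by presburger
  then have "y ^ (Q ^ 2) = c ^ 2 * y" using pow_Q_pow_twice[OF assms(4,7)] pow_Q_pow_mod_4[of y "2 * d"] by simp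
  then show ?thesis using assms(1-4) mem_Eset_of_pow_Q_sq[of y "c ^ 2"] by (simp add: K_mult power2_eq_square)
qed

definition orbit :: "'a \<Rightarrow> 'a set" where
  "orbit y = {l * y ^ (Q ^ k) | l k. l \<in> K \<and> l \<noteq> 0 \<and> k < 4}"

definition Aset :: "'a \<Rightarrow> 'a set" where
  "Aset z = {y. tr y = 0 \<and> y \<noteq> 0 \<and> chi y = z} - Eset"

lemma scaled_pow_Q_pow: "l \<in> K \<Longrightarrow> (l * y ^ (Q ^ i)) ^ (Q ^ m) = l * y ^ (Q ^ (i + m))"
  by (simp add: power_mult_distrib K_pow_Q_pow pow_Q_pow_pow)

lemma scaled_pow_Q_pow_inverse:
  assumes "l \<in> K" "k < 4"
  shows "(l * y ^ (Q ^ k)) ^ (Q ^ ((4 - k) mod 4)) = l * y"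
proof (cases "k = 0")
  case False
  then have "(4 - k) mod 4 = 4 - k" "k + (4 - k) = 4" using assms(2) by simp_all
  then show ?thesis using scaled_pow_Q_pow[OF assms(1), of y k "4 - k"] pow_Q4[of y] by simp
qed simp

lemma orbit_subset_Aset:
  assumes z: "z = 1 \<or> z = -1" and y: "y \<in> Aset z"
  shows "orbit y \<subseteq> Aset z"
proof
  fix x assume "x \<in> orbit y"
  then obtain l k where lk: "l \<in> K" "l \<noteq> 0" "k < 4" "x = l * y ^ (Q ^ k)" by (auto simp: orbit_def)
  have y': "tr y = 0" "y \<noteq> 0" "chi y = z" "y \<notin> Eset" using y by (auto simp: Aset_def)
  have "tr x = 0" "x \<noteq> 0" "chi x = z"
    using lk y' z chi_pow_Q_pow[of y k] by (simp_all add: tr_scale tr_pow_Q_pow chi_mult chi_K)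
  moreover have "x \<notin> Eset"
  proof
    assume "x \<in> Eset"
    then have "l * y \<in> Eset"
      using Eset_pow_Q_pow scaled_pow_Q_pow_inverse[OF lk(1,3), of y] lk(4) by metis
    then have "inverse l * (l * y) \<in> Eset" using lk K_inverse Eset_scale by simp
    moreover have "inverse l * (l * y) = y" using lk(2) by (simp flip: mult.assoc)
    ultimately show False using y' by simp
  qed
  ultimately show "x \<in> Aset z" by (simp add: Aset_def)
qed

lemma orbit_coordinates_unique:
  assumes z: "z = 1 \<or> z = -1" and y: "y \<in> Aset z"
    and "l \<in> K" "l \<noteq> 0" "l' \<in> K" "l' \<noteq> 0" "k < 4" "k' < 4"
    and eq: "l * y ^ (Q ^ k) = l' * y ^ (Q ^ k')"
  shows "l = l' \<and> k = k'"
proof -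
  have y': "tr y = 0" "y \<noteq> 0" "chi y = z" "y \<notin> Eset" using y by (auto simp: Aset_def)
  have "k = k'"
  proof (rule ccontr)
    assume "k \<noteq> k'"
    have False if "i < j" "j < 4" "m \<in> K" "m \<noteq> 0" "m' \<in> K" "m' \<noteq> 0"
      and "m * y ^ (Q ^ i) = m' * y ^ (Q ^ j)" for i j m m'
    proof -
      have "(m * y ^ (Q ^ i)) ^ (Q ^ (4 - j)) = (m' * y ^ (Q ^ j)) ^ (Q ^ (4 - j))" using that(7) by simp
      then have "m * y ^ (Q ^ (i + (4 - j))) = m' * y"
        using scaled_pow_Q_pow[OF that(3)] scaled_pow_Q_pow[OF that(5), of y j "4 - j"] that(2) pow_Q4[of y]
        by simp
      then have "y ^ (Q ^ (i + (4 - j))) = (m' / m) * y" using that(4) by (simp add: field_simps)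
      then have "y \<in> Eset"
        using y' z that by (intro mem_Eset_of_pow_Q_pow[of y "m' / m" "i + (4 - j)"]) (auto intro: K_divide)
      then show False using y' by simp
    qed
    then show False using \<open>k \<noteq> k'\<close> assms(3-9) by (metis linorder_neqE_nat)
  qed
  then show ?thesis using eq y'(2) by simp
qed

lemma card_orbit:
  assumes z: "z = 1 \<or> z = -1" and y: "y \<in> Aset z"
  shows "card (orbit y) = 4 * (Q - 1)"
proof -
  have "inj_on (\<lambda>(l, k). l * y ^ (Q ^ k)) ((K - {0}) \<times> {..<4})"
    using orbit_coordinates_unique[OF z y] by (auto simp: inj_on_def)
  moreover have "orbit y = (\<lambda>(l, k). l * y ^ (Q ^ k)) ` ((K - {0}) \<times> {..<4})"
    by (auto simp: orbit_def)
  ultimately show ?thesis using card_K_minus_zero by (simp add: card_image card_cartesian_product)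
qed

lemma orbit_subset: "x \<in> orbit y \<Longrightarrow> orbit x \<subseteq> orbit y"
proof
  fix u assume "x \<in> orbit y" "u \<in> orbit x"
  then obtain l k l' k' where lk: "l \<in> K" "l \<noteq> 0" "x = l * y ^ (Q ^ k)"
    and lk': "l' \<in> K" "l' \<noteq> 0" "u = l' * x ^ (Q ^ k')"
    by (auto simp: orbit_def)
  have "u = (l' * l) * y ^ (Q ^ ((k + k') mod 4))"
    using lk lk' scaled_pow_Q_pow[of l y k k'] pow_Q_pow_mod_4[of y "k + k'"] by simp
  moreover have "l' * l \<in> K" "l' * l \<noteq> 0" using lk lk' by (auto intro: K_mult)
  ultimately show "u \<in> orbit y" unfolding orbit_def by force
qed

lemma orbit_self: "y \<in> orbit y"
  unfolding orbit_def using K_one by (intro CollectI exI[of _ 1] exI[of _ 0]) auto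

lemma orbit_eq: "x \<in> orbit y \<Longrightarrow> orbit x = orbit y"
proof
  assume x: "x \<in> orbit y"
  then show "orbit x \<subseteq> orbit y" by (rule orbit_subset)
  obtain l k where lk: "l \<in> K" "l \<noteq> 0" "k < 4" "x = l * y ^ (Q ^ k)" using x by (auto simp: orbit_def)
  then have "y = inverse l * x ^ (Q ^ ((4 - k) mod 4))"
    using scaled_pow_Q_pow_inverse[OF lk(1,3), of y] by simp
  moreover have "inverse l \<in> K" "inverse l \<noteq> 0" using lk by (auto intro: K_inverse)
  ultimately have "y \<in> orbit x" unfolding orbit_def by force
  then show "orbit y \<subseteq> orbit x" by (rule orbit_subset)
qed

lemma dvd_card_Aset:
  assumes z: "z = 1 \<or> z = -1"
  shows "4 * (Q - 1) dvd card (Aset z)"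
proof -
  have "Aset z = \<Union> (orbit ` Aset z)" using orbit_subset_Aset[OF z] orbit_self by blast
  moreover have "4 * (Q - 1) dvd card (\<Union> (orbit ` Aset z))"
  proof (rule dvd_partition)
    show "\<forall>c\<in>orbit ` Aset z. 4 * (Q - 1) dvd card c" using card_orbit[OF z] by auto
    show "\<forall>c1\<in>orbit ` Aset z. \<forall>c2\<in>orbit ` Aset z. c1 \<noteq> c2 \<longrightarrow> c1 \<inter> c2 = {}"
      using orbit_eq by blast
  qed simp
  ultimately show ?thesis by simp
qed

lemma ker_count_eq_card_Aset:
  assumes "z = 1 \<or> z = -1"
  shows "ker_count z = card (Aset z) + (if z = chi_E then Q - 1 else 0)"
proof -
  have "{y. tr y = 0 \<and> y \<noteq> 0 \<and> chi y = z} \<inter> Eset = (if z = chi_E then Eset else {})"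
    using tr_Eset chi_Eset by (auto simp: Eset_def)
  moreover have "{y. tr y = 0 \<and> y \<noteq> 0 \<and> chi y = z} = Aset z \<union> ({y. tr y = 0 \<and> y \<noteq> 0 \<and> chi y = z} \<inter> Eset)"
    by (auto simp: Aset_def)
  ultimately have "ker_count z = card (Aset z \<union> (if z = chi_E then Eset else {}))"
    by (simp add: ker_count_def)
  also have "\<dots> = card (Aset z) + (if z = chi_E then Q - 1 else 0)"
  proof -
    have "Aset z \<inter> Eset = {}" by (auto simp: Aset_def)
    then have "card (Aset z \<union> Eset) = card (Aset z) + (Q - 1)"
      by (simp add: card_Un_disjoint card_Eset)
    then show ?thesis by (cases "z = chi_E") simp_all
  qed
  finally show ?thesis .
qed

lemma X_minus_Y_eq_mult: "\<exists>k. int X - int Y = (int Q - 1) * (4 * k + (if even t then 1 else -1))"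
proof -
  obtain a where a: "card (Aset (-1)) = 4 * (Q - 1) * a" using dvd_card_Aset[of "-1"] by auto
  obtain b where b: "card (Aset 1) = 4 * (Q - 1) * b" using dvd_card_Aset[of 1] by auto
  have Q1: "int (Q - 1) = int Q - 1" using Q_ge_2 by simp
  have "int (ker_count (-1)) = 4 * (int Q - 1) * int a + (if even t then int Q - 1 else 0)"
    using ker_count_eq_card_Aset[of "-1"] a iota_distinct(1) Q1 by (simp add: chi_E_def)
  moreover have "int (ker_count 1) = 4 * (int Q - 1) * int b + (if even t then 0 else int Q - 1)"
    using ker_count_eq_card_Aset[of 1] b iota_distinct(1) Q1 by (simp add: chi_E_def)
  moreover have "int X - int Y = int (ker_count (-1)) - int (ker_count 1)" by (simp add: X_def Y_def)
  ultimately have "int X - int Y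
      = 4 * (int Q - 1) * int a - 4 * (int Q - 1) * int b + (if even t then int Q - 1 else - (int Q - 1))"
    by (cases "even t") simp_all
  also have "\<dots> = (int Q - 1) * (4 * (int a - int b) + (if even t then 1 else -1))"
    by (cases "even t") (simp_all add: algebra_simps)
  finally show ?thesis by blast
qed

lemma X_minus_Y: "int X - int Y = int Q * (int Q - 1)"
proof -
  have "int X - int Y = int Q * (int Q - 1) \<or> int X - int Y = - (int Q * (int Q - 1))"
    using X_minus_Y_sq power2_eq_iff by blast
  moreover obtain k where k: "int X - int Y = (int Q - 1) * (4 * k + (if even t then 1 else -1))"
    using X_minus_Y_eq_mult by blast
  moreover have "int X - int Y \<noteq> - (int Q * (int Q - 1))"
  proof
    assume "int X - int Y = - (int Q * (int Q - 1))"
    then have "(int Q - 1) * (4 * k + (if even t then 1 else -1)) = (int Q - 1) * (- int Q)"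
      using k by (simp add: algebra_simps)
    moreover have "int Q - 1 \<noteq> 0" using Q_ge_2 by simp
    ultimately have "4 * k + (if even t then 1 else -1) = - (2 * int t + 1)"
      using Q_eq_t mult_left_cancel by fastforce
    then show False by (cases "even t") (auto elim!: evenE oddE, presburger+)
  qed
  ultimately show ?thesis by blast
qed

lemma Q_plus_one_mult_Y: "(Q + 1) * Y = 2 * e"
proof -
  have "int (X + Y) = int (Q ^ 3 - 1)" using X_plus_Y by simp
  moreover have "1 \<le> Q ^ 3" using Q_ge_2 by simp
  ultimately have "int X + int Y = int Q ^ 3 - 1" by (simp add: of_nat_diff)
  then have Y2: "2 * int Y = int Q ^ 3 - 1 - int Q * (int Q - 1)" using X_minus_Y by simp
  have "int (q - 1) = int (4 * e)" using q_minus_one_eq_4e by simp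
  then have e4: "4 * int e = int Q ^ 4 - 1" using q_eq q_minus_one_pos by (simp add: of_nat_diff)
  have "2 * int ((Q + 1) * Y) = (int Q + 1) * (2 * int Y)" by (simp add: algebra_simps)
  also have "\<dots> = int Q ^ 4 - 1"
    unfolding Y2 by (simp add: power2_eq_square power3_eq_cube power4_eq_xxxx algebra_simps)
  also have "\<dots> = 2 * int (2 * e)" using e4 by simp
  finally show ?thesis by (simp only: mult_cancel_left of_nat_eq_iff) simp
qed

lemma sum_orth_count_annih_by_class:
  "(\<Sum>a\<in>annih h. orth_count a) = 2 * e + card (annih h \<inter> Dset) * X + card (annih h \<inter> Bset) * Y"
proof -
  have "0 \<in> annih h" by (simp add: annih_def tr_zero)
  then have "(\<Sum>a\<in>annih h. orth_count a) = orth_count 0 + (\<Sum>a\<in>annih h - {0}. orth_count a)"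
    by (simp add: sum.remove)
  also have "annih h - {0} = (annih h \<inter> Dset) \<union> (annih h \<inter> Bset)"
    using nonzero_eq_Dset_Un_Bset by blast
  also have "(\<Sum>a\<in>(annih h \<inter> Dset) \<union> (annih h \<inter> Bset). orth_count a)
      = (\<Sum>a\<in>annih h \<inter> Dset. orth_count a) + (\<Sum>a\<in>annih h \<inter> Bset. orth_count a)"
    by (rule sum.union_disjoint) (use Dset_Bset_disjoint in auto)
  also have "\<dots> = card (annih h \<inter> Dset) * X + card (annih h \<inter> Bset) * Y"
    by (simp add: orth_count_Dset orth_count_Bset)
  finally show ?thesis using card_Cset tr_zero by (simp add: orth_count_def)
qed

lemma sum_orth_count_annih_by_span2:
  assumes "h \<notin> K"
  shows "(\<Sum>a\<in>annih h. orth_count a) = card (Cset \<inter> span2 h) * Q ^ 2 + card (Cset - span2 h) * Q"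
proof -
  have "(\<Sum>a\<in>annih h. orth_count a) = (\<Sum>a\<in>annih h. \<Sum>c\<in>Cset. of_bool (tr (a * c) = 0))"
    by (simp add: orth_count_eq_sum)
  also have "\<dots> = (\<Sum>c\<in>Cset. card {a \<in> annih h. tr (a * c) = 0})"
    by (subst sum.swap) (simp add: Int_def)
  also have "\<dots> = (\<Sum>c\<in>Cset \<inter> span2 h. card {a \<in> annih h. tr (a * c) = 0})
      + (\<Sum>c\<in>Cset - span2 h. card {a \<in> annih h. tr (a * c) = 0})"
    by (rule sum.Int_Diff) simp
  also have "\<dots> = (\<Sum>c\<in>Cset \<inter> span2 h. Q ^ 2) + (\<Sum>c\<in>Cset - span2 h. Q)"
  proof -
    have "card {a \<in> annih h. tr (a * c) = 0} = Q ^ 2" if "c \<in> span2 h" for c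
    proof -
      have "{a \<in> annih h. tr (a * c) = 0} = annih h" using tr_mult_span2_annih that by blast
      then show ?thesis using card_annih[OF assms] by simp
    qed
    then show ?thesis using card_annih_tr_orth[OF assms] by simp
  qed
  finally show ?thesis by simp
qed

lemma card_annih_Dset_plus_Bset:
  assumes "h \<notin> K"
  shows "card (annih h \<inter> Dset) + card (annih h \<inter> Bset) = Q ^ 2 - 1"
proof -
  have "0 \<in> annih h" by (simp add: annih_def tr_zero)
  then have "card (annih h - {0}) = Q ^ 2 - 1" using card_annih[OF assms] by simp
  moreover have "annih h - {0} = (annih h \<inter> Dset) \<union> (annih h \<inter> Bset)"
    using nonzero_eq_Dset_Un_Bset by blast
  moreover have "card ((annih h \<inter> Dset) \<union> (annih h \<inter> Bset))
      = card (annih h \<inter> Dset) + card (annih h \<inter> Bset)"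
    by (rule card_Un_disjoint) (use Dset_Bset_disjoint in auto)
  ultimately show ?thesis by simp
qed

lemma card_Cset_inter_span2:
  assumes "h \<notin> K"
  shows "card (Cset \<inter> span2 h) = card (annih h \<inter> Dset)"
proof -
  define c d nD nB where "c = card (Cset \<inter> span2 h)" and "d = card (Cset - span2 h)"
    and "nD = card (annih h \<inter> Dset)" and "nB = card (annih h \<inter> Bset)"
  have "2 * e + nD * X + nB * Y = c * Q ^ 2 + d * Q"
    using sum_orth_count_annih_by_class sum_orth_count_annih_by_span2[OF assms]
    by (simp add: c_def d_def nD_def nB_def)
  moreover have "c + d = 2 * e"
    using card_Cset card_Int_Diff[of Cset "span2 h"] by (simp add: c_def d_def)
  moreover have "nD + nB + 1 = Q ^ 2"
    using card_annih_Dset_plus_Bset[OF assms] Q_ge_2 by (simp add: nD_def nB_def)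
  ultimately have "2 * int e + int nD * int X + int nB * int Y = int c * int Q ^ 2 + int d * int Q"
    "int c + int d = 2 * int e" "int nD + int nB + 1 = int Q ^ 2"
    by (simp_all flip: of_nat_mult of_nat_add of_nat_power)
  moreover have "int X = int Y + int Q * (int Q - 1)" using X_minus_Y by simp
  moreover have "(int Q + 1) * int Y = 2 * int e"
    using arg_cong[OF Q_plus_one_mult_Y, of int] by (simp add: algebra_simps)
  ultimately have "int Q * (int Q - 1) * int nD = int Q * (int Q - 1) * int c"
    using double_count_cancel[of "int e" "int nD" "int Y" "int Q" "int nB" "int c" "int d"] by simp
  moreover have "int Q * (int Q - 1) \<noteq> 0" using Q_ge_2 by simp
  ultimately show ?thesis by (simp add: c_def nD_def)
qed

lemma peisert_clique_iff_subset_Cset: "peisert_clique g (span2 h) \<longleftrightarrow> span2 h - {0} \<subseteq> Cset"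
proof
  assume clique: "peisert_clique g (span2 h)"
  show "span2 h - {0} \<subseteq> Cset"
  proof
    fix x assume "x \<in> span2 h - {0}"
    then have "peisert_adj g x 0" using clique zero_in_span2 unfolding peisert_clique_def by blast
    then show "x \<in> Cset" by (simp add: peisert_adj_iff Cset_def)
  qed
next
  assume "span2 h - {0} \<subseteq> Cset"
  then show "peisert_clique g (span2 h)"
    using span2_diff by (fastforce simp: peisert_clique_def peisert_adj_iff Cset_def)
qed

lemma peisert_clique_span2_iff:
  assumes "h \<notin> K"
  shows "peisert_clique g (span2 h) \<longleftrightarrow> annih h \<inter> Bset = {}"
proof -
  have card_S: "card (span2 h - {0}) = Q ^ 2 - 1"
    using card_span2[OF assms] zero_in_span2 by simp
  have sub: "Cset \<inter> span2 h \<subseteq> span2 h - {0}" by (auto simp: Cset_def)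
  have "span2 h - {0} \<subseteq> Cset \<longleftrightarrow> card (Cset \<inter> span2 h) = Q ^ 2 - 1"
  proof
    assume "span2 h - {0} \<subseteq> Cset"
    then have "Cset \<inter> span2 h = span2 h - {0}" using sub by blast
    then show "card (Cset \<inter> span2 h) = Q ^ 2 - 1" using card_S by simp
  next
    assume "card (Cset \<inter> span2 h) = Q ^ 2 - 1"
    then have "Cset \<inter> span2 h = span2 h - {0}" using sub card_S by (intro card_subset_eq) auto
    then show "span2 h - {0} \<subseteq> Cset" by blast
  qed
  also have "\<dots> \<longleftrightarrow> card (annih h \<inter> Bset) = 0"
    using card_Cset_inter_span2[OF assms] card_annih_Dset_plus_Bset[OF assms] by linarith
  finally show ?thesis using peisert_clique_iff_subset_Cset by simp
qed

lemma Bset_eq: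
  "{g ^ (4 * k) | k. 1 \<le> k \<and> k \<le> (q - 1) div 4} \<union> {g ^ (4 * k + 3) | k. 1 \<le> k \<and> k \<le> (q - 1) div 4} = Bset"
proof -
  have shift: "{g ^ (4 * k + j) | k. 1 \<le> k \<and> k \<le> e} = (\<lambda>k. g ^ (4 * k + j)) ` {..<e}" for j
  proof -
    have "g ^ (4 * e + j) = g ^ (4 * 0 + j)" using g_pow_eq_iff q_minus_one_eq_4e by simp
    moreover have "{1..e} = insert e {1..<e}" "{..<e} = insert 0 {1..<e}" using e_pos by auto
    ultimately have "(\<lambda>k. g ^ (4 * k + j)) ` {1..e} = (\<lambda>k. g ^ (4 * k + j)) ` {..<e}" by simp
    moreover have "{g ^ (4 * k + j) | k. 1 \<le> k \<and> k \<le> e} = (\<lambda>k. g ^ (4 * k + j)) ` {1..e}" by auto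
    ultimately show ?thesis by simp
  qed
  have "Bset = {x. x \<noteq> 0 \<and> chi x = iota ^ 0} \<union> {x. x \<noteq> 0 \<and> chi x = iota ^ 3}"
    using iota_pow_eq_iff(4)[of 3] by (auto simp: Bset_def)
  then show ?thesis
    using shift[of 0] shift[of 3] chi_class_eq_image[of 0] chi_class_eq_image[of 3] by (simp add: e_def)
qed

end

theorem theorem5p7:
  fixes g h :: "'a::{finite,field}" and p r :: nat
  assumes "r > 0" and "prime p" and "p mod 4 = 3"
    and "card (UNIV :: 'a set) = p ^ (4 * r)"
    and "primitive_root g"
    and "h \<notin> subfield_pow (p ^ r)"
  shows "peisert_clique g {x + h * y | x y. x \<in> subfield_pow (p ^ r) \<and> y \<in> subfield_pow (p ^ r)}
    \<longleftrightarrow> ({x ^ (p ^ r) - x | x. True} \<inter> {inverse h * z | z. z \<in> {x ^ (p ^ r) - x | x. True}}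
          \<inter> ({g ^ (4 * k) | k. 1 \<le> k \<and> k \<le> (card (UNIV :: 'a set) - 1) div 4}
             \<union> {g ^ (4 * k + 3) | k. 1 \<le> k \<and> k \<le> (card (UNIV :: 'a set) - 1) div 4}) = {})"
proof -
  interpret peisert_setting p r g
    using assms(1-5) by unfold_locales
  have "h \<noteq> 0" using assms(6) K_zero by (auto simp: Q_def)
  show ?thesis
    using peisert_clique_span2_iff[OF assms(6)[folded Q_def]]
      image_pow_Q_minus_self_inter_eq_annih[OF \<open>h \<noteq> 0\<close>] Bset_eq
    by (simp add: span2_def q_def flip: Q_def)
qed

end
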